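(* Let $K$ be a Markov kernel on a finite set $V$ and $\mu$ a probability measure on $V$ such that $\mu'=\mu K$ is positive. Let $P=K^*_\mu K_\mu$ acting on $\ell^2(\mu')$ and let $l(P)$ be its logarithmic Sobolev constant. Then for all $q_0\ge2$ and all $q\le[1+l(P)]q_0$, \[\|K\|_{\ell^{q_0}(\mu')\to\ell^q(\mu)}\le1.\]
   Context: $K$ acts on functions by $Kf(x)=\sum_yK(x,y)f(y)$; $K_\mu$ denotes $K$ viewed as an operator $\ell^2(\mu')\to\ell^2(\mu)$, whose adjoint $K_\mu^*:\ell^2(\mu)\to\ell^2(\mu')$ has kernel $K^*_\mu(x,y)=K(y,x)\mu(y)/\mu'(x)$; thus $P(x,y)=\frac{1}{\mu'(x)}\sum_z\mu(z)K(z,x)K(z,y)$, reversible with respect to $\mu'$. $\|f\|_{\ell^p(\nu)}=(\sum_x|f(x)|^p\nu(x))^{1/p}$, and $\|A\|_{\ell^p(\nu)\to\ell^q(\nu')}=\sup\{\|Af\|_{\ell^q(\nu')}:\|f\|_{\ell^p(\nu)}\le1\}$. $\mathcal E_{P,\mu'}(f,f)=\frac12\sum_{x,y}|f(x)-f(y)|^2\mu'(x)P(x,y)$, $\mathcal L(f^2,\nu)=\sum_xf(x)^2\log\bigl(f(x)^2/\|f\|^2_{\ell^2(\nu)}\bigr)\nu(x)$, and $l(P)=\inf\{\mathcal E_{P,\mu'}(f,f)/\mathcal L(f^2,\mu'):\mathcal L(f^2,\mu')\ne0,\ f\text{ nonconstant}\}$. *)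

theory Defs
  imports "HOL-Analysis.Analysis"
begin

definition markov_kernel :: "('v::finite \<Rightarrow> 'v \<Rightarrow> real) \<Rightarrow> bool" where
  "markov_kernel K \<longleftrightarrow> (\<forall>x y. 0 \<le> K x y) \<and> (\<forall>x. (\<Sum>y\<in>UNIV. K x y) = 1)"

definition prob_measure_fin :: "('v::finite \<Rightarrow> real) \<Rightarrow> bool" where
  "prob_measure_fin \<mu> \<longleftrightarrow> (\<forall>x. 0 \<le> \<mu> x) \<and> (\<Sum>x\<in>UNIV. \<mu> x) = 1"

definition push_measure :: "('v::finite \<Rightarrow> real) \<Rightarrow> ('v \<Rightarrow> 'v \<Rightarrow> real) \<Rightarrow> 'v \<Rightarrow> real" where
  "push_measure \<mu> K y = (\<Sum>x\<in>UNIV. \<mu> x * K x y)"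

definition kernel_apply :: "('v::finite \<Rightarrow> 'v \<Rightarrow> real) \<Rightarrow> ('v \<Rightarrow> real) \<Rightarrow> 'v \<Rightarrow> real" where
  "kernel_apply K f x = (\<Sum>y\<in>UNIV. K x y * f y)"

definition adjoint_kernel :: "('v::finite \<Rightarrow> 'v \<Rightarrow> real) \<Rightarrow> ('v \<Rightarrow> real) \<Rightarrow> 'v \<Rightarrow> 'v \<Rightarrow> real" where
  "adjoint_kernel K \<mu> x y = K y x * \<mu> y / push_measure \<mu> K x"

definition P_kernel :: "('v::finite \<Rightarrow> 'v \<Rightarrow> real) \<Rightarrow> ('v \<Rightarrow> real) \<Rightarrow> 'v \<Rightarrow> 'v \<Rightarrow> real" where
  "P_kernel K \<mu> x y = (\<Sum>z\<in>UNIV. adjoint_kernel K \<mu> x z * K z y)"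

definition lp_norm :: "real \<Rightarrow> ('v::finite \<Rightarrow> real) \<Rightarrow> ('v \<Rightarrow> real) \<Rightarrow> real" where
  "lp_norm p \<nu> f = (\<Sum>x\<in>UNIV. \<bar>f x\<bar> powr p * \<nu> x) powr (1 / p)"

definition op_norm :: "('v::finite \<Rightarrow> 'v \<Rightarrow> real) \<Rightarrow> real \<Rightarrow> ('v \<Rightarrow> real) \<Rightarrow> real \<Rightarrow> ('v \<Rightarrow> real) \<Rightarrow> real" where
  "op_norm A p \<nu> q \<nu>' = Sup {lp_norm q \<nu>' (kernel_apply A f) | f. lp_norm p \<nu> f \<le> 1}"

definition dirichlet_form :: "('v::finite \<Rightarrow> 'v \<Rightarrow> real) \<Rightarrow> ('v \<Rightarrow> real) \<Rightarrow> ('v \<Rightarrow> real) \<Rightarrow> real" where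
  "dirichlet_form P \<nu> f = (1/2) * (\<Sum>x\<in>UNIV. \<Sum>y\<in>UNIV. \<bar>f x - f y\<bar>^2 * \<nu> x * P x y)"

definition entropy_like :: "('v::finite \<Rightarrow> real) \<Rightarrow> ('v \<Rightarrow> real) \<Rightarrow> real" where
  "entropy_like f \<nu> = (\<Sum>x\<in>UNIV. (f x)^2 * ln ((f x)^2 / (lp_norm 2 \<nu> f)^2) * \<nu> x)"

definition log_sobolev_const :: "('v::finite \<Rightarrow> 'v \<Rightarrow> real) \<Rightarrow> ('v \<Rightarrow> real) \<Rightarrow> real" where
  "log_sobolev_const P \<nu> = Inf {dirichlet_form P \<nu> f / entropy_like f \<nu> | f.
      entropy_like f \<nu> \<noteq> 0 \<and> (\<exists>x y. f x \<noteq> f y)}"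

end

theory Submission
  imports Defs
begin

text \<open>
  Let \<open>\<Sum>y. \<bar>f y\<bar> powr q0 * \<mu>' y \<le> 1\<close>. For \<open>q \<le> q0\<close>, Jensen's inequality for the Markov
  kernel and the tangent line of the concave map \<open>x \<mapsto> x powr (q / q0)\<close> reduce the claim
  to \<open>\<mu>K = \<mu>'\<close>. For \<open>q > q0\<close> put \<open>\<phi> = \<bar>f\<bar> powr (q / 2)\<close>; then
  \<open>\<Sum>x. \<bar>Kf x\<bar> powr q * \<mu> x \<le> \<Sum>x. (K\<phi> x)\<^sup>2 * \<mu> x = \<parallel>\<phi>\<parallel>\<^sup>2 - E(\<phi>)\<close> with \<open>E\<close> the Dirichlet
  form of \<open>P = K\<^sup>*K\<close>. Jensen's inequality for \<open>exp\<close> under the probability \<open>\<phi>\<^sup>2\<mu>'/\<parallel>\<phi>\<parallel>\<^sup>2\<close>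
  (Beckner's argument) gives \<open>\<parallel>\<phi>\<parallel>\<^sup>2 exp (- c Ent(\<phi>) / \<parallel>\<phi>\<parallel>\<^sup>2) \<le> 1\<close> for \<open>c = q/q0 - 1 \<le> l(P)\<close>,
  and the log-Sobolev inequality \<open>c Ent(\<phi>) \<le> E(\<phi>)\<close> together with \<open>1 + x \<le> exp x\<close> closes the gap.
\<close>

lemma powr_le_tangent:
  fixes x t :: real
  assumes "0 \<le> x" "0 \<le> t" "t \<le> 1"
  shows "x powr t \<le> 1 + t * (x - 1)"
proof (cases "x = 0")
  case True then show ?thesis using assms by simp
next
  case False
  have "x powr t * 1 powr (1 - t) \<le> t * x + (1 - t) * 1"
    using Youngs_inequality_0[of t "1 - t" x 1] assms False by simp
  then show ?thesis by (simp add: algebra_simps)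
qed

lemma tangent_le_powr:
  fixes y s :: real
  assumes "0 \<le> y" "1 \<le> s"
  shows "1 + s * (y - 1) \<le> y powr s"
proof -
  have "(y powr s) powr (1/s) \<le> 1 + (1/s) * (y powr s - 1)"
    by (rule powr_le_tangent) (use assms in auto)
  moreover have "(y powr s) powr (1/s) = y" using assms by (simp add: powr_powr)
  ultimately have "s * y \<le> s * (1 + (1/s) * (y powr s - 1))" using assms by simp
  also have "\<dots> = s + (y powr s - 1)" using assms by (simp add: algebra_simps)
  finally show ?thesis by (simp add: algebra_simps)
qed

lemma powr_weighted_sum_le:
  fixes w z :: "'a \<Rightarrow> real"
  assumes "finite S" "\<And>i. i \<in> S \<Longrightarrow> 0 \<le> w i" "(\<Sum>i\<in>S. w i) = 1"
    and "\<And>i. i \<in> S \<Longrightarrow> 0 \<le> z i" "1 \<le> s"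
  shows "(\<Sum>i\<in>S. w i * z i) powr s \<le> (\<Sum>i\<in>S. w i * z i powr s)"
proof -
  define c where "c = (\<Sum>i\<in>S. w i * z i)"
  have "0 \<le> c" unfolding c_def using assms by (auto intro: sum_nonneg)
  show ?thesis
  proof (cases "c = 0")
    case True then show ?thesis using assms by (simp add: c_def[symmetric] sum_nonneg)
  next
    case False
    with \<open>0 \<le> c\<close> have "0 < c" by simp
    have "1 = (\<Sum>i\<in>S. w i * (1 + s * (z i / c - 1)))"
    proof -
      have "(\<Sum>i\<in>S. w i * (1 + s * (z i / c - 1)))
          = (\<Sum>i\<in>S. w i) + s / c * (\<Sum>i\<in>S. w i * z i) - s * (\<Sum>i\<in>S. w i)"
        by (simp add: algebra_simps sum.distrib sum_subtractf sum_distrib_left)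
      then show ?thesis using assms \<open>0 < c\<close> by (simp add: c_def[symmetric])
    qed
    also have "\<dots> \<le> (\<Sum>i\<in>S. w i * (z i / c) powr s)"
      by (intro sum_mono mult_left_mono tangent_le_powr) (use assms \<open>0 < c\<close> in auto)
    also have "\<dots> = (\<Sum>i\<in>S. w i * z i powr s) / c powr s"
      using assms \<open>0 < c\<close> by (simp add: powr_divide sum_divide_distrib)
    finally show ?thesis using \<open>0 < c\<close> by (simp add: c_def field_simps)
  qed
qed

lemma sum_mult_kernel_apply:
  "(\<Sum>x\<in>UNIV. \<mu> x * kernel_apply K h x) = (\<Sum>y\<in>UNIV. push_measure \<mu> K y * h y)"
proof -
  have "(\<Sum>x\<in>UNIV. \<mu> x * kernel_apply K h x) = (\<Sum>x\<in>UNIV. \<Sum>y\<in>UNIV. \<mu> x * K x y * h y)"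
    by (simp add: kernel_apply_def sum_distrib_left mult.assoc)
  also have "\<dots> = (\<Sum>y\<in>UNIV. \<Sum>x\<in>UNIV. \<mu> x * K x y * h y)" by (rule sum.swap)
  finally show ?thesis by (simp add: push_measure_def sum_distrib_right)
qed

lemma sum_push_measure:
  assumes "markov_kernel K" "prob_measure_fin \<mu>"
  shows "(\<Sum>y\<in>UNIV. push_measure \<mu> K y) = 1"
  using sum_mult_kernel_apply[of \<mu> K "\<lambda>_. 1"] assms
  by (simp add: kernel_apply_def markov_kernel_def prob_measure_fin_def)

lemma kernel_apply_nonneg:
  assumes "markov_kernel K" "\<And>y. 0 \<le> h y"
  shows "0 \<le> kernel_apply K h x"
  using assms unfolding kernel_apply_def markov_kernel_def by (auto intro: sum_nonneg)

lemma abs_kernel_apply_le: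
  assumes "markov_kernel K"
  shows "\<bar>kernel_apply K f x\<bar> \<le> kernel_apply K (\<lambda>y. \<bar>f y\<bar>) x"
proof -
  have "\<bar>kernel_apply K f x\<bar> \<le> (\<Sum>y\<in>UNIV. \<bar>K x y * f y\<bar>)"
    unfolding kernel_apply_def by (rule sum_abs)
  also have "\<dots> = kernel_apply K (\<lambda>y. \<bar>f y\<bar>) x"
    using assms by (simp add: kernel_apply_def markov_kernel_def abs_mult)
  finally show ?thesis .
qed

lemma abs_kernel_apply_powr_le:
  assumes "markov_kernel K" "1 \<le> s"
  shows "\<bar>kernel_apply K f x\<bar> powr s \<le> kernel_apply K (\<lambda>y. \<bar>f y\<bar> powr s) x"
proof -
  have "\<bar>kernel_apply K f x\<bar> powr s \<le> (kernel_apply K (\<lambda>y. \<bar>f y\<bar>) x) powr s"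
    by (rule powr_mono2) (use assms abs_kernel_apply_le in auto)
  also have "\<dots> \<le> kernel_apply K (\<lambda>y. \<bar>f y\<bar> powr s) x"
    unfolding kernel_apply_def
    by (rule powr_weighted_sum_le) (use assms in \<open>auto simp: markov_kernel_def\<close>)
  finally show ?thesis .
qed

lemma abs_kernel_apply_powr_le_power2:
  assumes "markov_kernel K" "2 \<le> q"
  shows "\<bar>kernel_apply K f x\<bar> powr q \<le> (kernel_apply K (\<lambda>y. \<bar>f y\<bar> powr (q / 2)) x)^2"
proof -
  have "\<bar>kernel_apply K f x\<bar> powr q = (\<bar>kernel_apply K f x\<bar> powr (q / 2)) powr 2"
    by (simp add: powr_powr)
  also have "\<dots> \<le> (kernel_apply K (\<lambda>y. \<bar>f y\<bar> powr (q / 2)) x) powr 2"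
    using assms by (intro powr_mono2 abs_kernel_apply_powr_le) auto
  finally show ?thesis using kernel_apply_nonneg[OF assms(1)] by simp
qed

lemma kernel_variance_eq:
  assumes "markov_kernel K"
  shows "(1/2) * (\<Sum>x\<in>UNIV. \<Sum>y\<in>UNIV. K z x * K z y * (\<phi> x - \<phi> y)^2)
     = kernel_apply K (\<lambda>x. \<phi> x ^ 2) z - (kernel_apply K \<phi> z)^2"
proof -
  have K1: "(\<Sum>y\<in>UNIV. K z y) = 1" using assms by (simp add: markov_kernel_def)
  have "K z x * K z y * (\<phi> x - \<phi> y)^2
      = K z y * (K z x * \<phi> x ^ 2) + K z x * (K z y * \<phi> y ^ 2) - 2 * ((K z x * \<phi> x) * (K z y * \<phi> y))"
    for x y by (simp add: power2_eq_square algebra_simps)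
  then have "(\<Sum>x\<in>UNIV. \<Sum>y\<in>UNIV. K z x * K z y * (\<phi> x - \<phi> y)^2)
     = (\<Sum>x\<in>UNIV. \<Sum>y\<in>UNIV. K z y * (K z x * \<phi> x ^ 2)) + (\<Sum>x\<in>UNIV. \<Sum>y\<in>UNIV. K z x * (K z y * \<phi> y ^ 2))
       - 2 * (\<Sum>x\<in>UNIV. \<Sum>y\<in>UNIV. (K z x * \<phi> x) * (K z y * \<phi> y))"
    by (simp only: sum.distrib sum_subtractf sum_distrib_left[symmetric])
  also have "\<dots> = 2 * kernel_apply K (\<lambda>x. \<phi> x ^ 2) z - 2 * (kernel_apply K \<phi> z)^2"
    by (simp add: sum_distrib_left[symmetric] sum_distrib_right[symmetric] K1
        sum_product[symmetric] kernel_apply_def power2_eq_square)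
  finally show ?thesis by simp
qed

lemma push_measure_mult_P_kernel:
  assumes "push_measure \<mu> K x \<noteq> 0"
  shows "push_measure \<mu> K x * P_kernel K \<mu> x y = (\<Sum>z\<in>UNIV. \<mu> z * K z x * K z y)"
  using assms by (simp add: P_kernel_def adjoint_kernel_def sum_distrib_left field_simps)

lemma dirichlet_form_P_kernel:
  assumes "markov_kernel K" "\<forall>y. push_measure \<mu> K y > 0"
  shows "dirichlet_form (P_kernel K \<mu>) (push_measure \<mu> K) \<phi>
     = (\<Sum>y\<in>UNIV. push_measure \<mu> K y * \<phi> y ^ 2) - (\<Sum>x\<in>UNIV. \<mu> x * (kernel_apply K \<phi> x)^2)"
proof -
  have "dirichlet_form (P_kernel K \<mu>) (push_measure \<mu> K) \<phi>
      = (1/2) * (\<Sum>x\<in>UNIV. \<Sum>y\<in>UNIV. \<Sum>z\<in>UNIV. \<mu> z * (K z x * K z y * (\<phi> x - \<phi> y)^2))"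
  proof -
    have "\<bar>\<phi> x - \<phi> y\<bar>^2 * push_measure \<mu> K x * P_kernel K \<mu> x y
        = (\<Sum>z\<in>UNIV. \<mu> z * (K z x * K z y * (\<phi> x - \<phi> y)^2))" for x y
    proof -
      have "push_measure \<mu> K x * P_kernel K \<mu> x y = (\<Sum>z\<in>UNIV. \<mu> z * K z x * K z y)"
        using assms(2) by (intro push_measure_mult_P_kernel) (simp add: less_imp_neq[symmetric])
      then have "\<bar>\<phi> x - \<phi> y\<bar>^2 * push_measure \<mu> K x * P_kernel K \<mu> x y
          = (\<Sum>z\<in>UNIV. (\<phi> x - \<phi> y)^2 * (\<mu> z * K z x * K z y))"
        by (simp add: sum_distrib_left mult.assoc)
      then show ?thesis by (simp add: mult_ac)
    qed
    then show ?thesis unfolding dirichlet_form_def by simp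
  qed
  also have "\<dots> = (\<Sum>z\<in>UNIV. \<mu> z * ((1/2) * (\<Sum>x\<in>UNIV. \<Sum>y\<in>UNIV. K z x * K z y * (\<phi> x - \<phi> y)^2)))"
    by (subst sum.swap, subst (2) sum.swap) (simp add: sum_distrib_left mult_ac)
  also have "\<dots> = (\<Sum>z\<in>UNIV. \<mu> z * kernel_apply K (\<lambda>x. \<phi> x ^ 2) z) - (\<Sum>z\<in>UNIV. \<mu> z * (kernel_apply K \<phi> z)^2)"
    by (simp only: kernel_variance_eq[OF assms(1)] right_diff_distrib sum_subtractf)
  finally show ?thesis by (simp add: sum_mult_kernel_apply)
qed

lemma P_kernel_nonneg:
  assumes "markov_kernel K" "prob_measure_fin \<mu>" "\<forall>y. push_measure \<mu> K y > 0"
  shows "0 \<le> P_kernel K \<mu> x y"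
  unfolding P_kernel_def adjoint_kernel_def using assms
  by (auto intro!: sum_nonneg mult_nonneg_nonneg divide_nonneg_pos
      simp: markov_kernel_def prob_measure_fin_def)

lemma dirichlet_form_nonneg:
  assumes "\<And>x y. 0 \<le> P x y" "\<And>x. 0 \<le> \<nu> x"
  shows "0 \<le> dirichlet_form P \<nu> f"
  unfolding dirichlet_form_def using assms by (auto intro!: sum_nonneg)

lemma lp_norm_2_power2:
  assumes "\<And>x. 0 \<le> \<nu> x"
  shows "(lp_norm 2 \<nu> f)^2 = (\<Sum>x\<in>UNIV. f x ^ 2 * \<nu> x)"
proof -
  have "0 \<le> (\<Sum>x\<in>UNIV. f x ^ 2 * \<nu> x)" using assms by (auto intro: sum_nonneg)
  moreover have "\<bar>a\<bar> powr 2 = a ^ 2" for a :: real by (simp add: powr_numeral)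
  ultimately show ?thesis unfolding lp_norm_def by (simp add: powr_half_sqrt)
qed

lemma entropy_like_nonneg:
  assumes "\<And>x. 0 \<le> \<nu> x" "(\<Sum>x\<in>UNIV. \<nu> x) = 1"
  shows "0 \<le> entropy_like f \<nu>"
proof -
  define m where "m = (\<Sum>x\<in>UNIV. f x ^ 2 * \<nu> x)"
  have "0 \<le> m" unfolding m_def using assms by (auto intro: sum_nonneg)
  have "(f x ^ 2 - m) * \<nu> x \<le> f x ^ 2 * ln (f x ^ 2 / m) * \<nu> x" for x
  proof (cases "f x = 0 \<or> \<nu> x = 0")
    case True then show ?thesis using \<open>0 \<le> m\<close> assms by auto
  next
    case False
    then have fx: "0 < f x ^ 2" and "0 < \<nu> x" using assms by (auto simp: less_le)
    have "f x ^ 2 * \<nu> x \<le> m" unfolding m_def by (rule member_le_sum) (use assms in auto)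
    with fx \<open>0 < \<nu> x\<close> have "0 < m" by (meson less_le_trans mult_pos_pos)
    have "- ln (f x ^ 2 / m) = ln (m / f x ^ 2)" using \<open>0 < m\<close> fx by (simp add: ln_div)
    also have "\<dots> \<le> m / f x ^ 2 - 1" by (rule ln_le_minus_one) (use \<open>0 < m\<close> fx in auto)
    finally have "f x ^ 2 - m \<le> f x ^ 2 * ln (f x ^ 2 / m)" using fx by (simp add: field_simps)
    then show ?thesis using \<open>0 < \<nu> x\<close> by (simp add: mult_right_mono)
  qed
  then have "(\<Sum>x\<in>UNIV. (f x ^ 2 - m) * \<nu> x) \<le> entropy_like f \<nu>"
    unfolding entropy_like_def lp_norm_2_power2[OF assms(1)] m_def[symmetric] by (rule sum_mono)
  moreover have "(\<Sum>x\<in>UNIV. (f x ^ 2 - m) * \<nu> x) = 0"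
    using assms(2) by (simp add: left_diff_distrib sum_subtractf sum_distrib_left[symmetric] m_def)
  ultimately show ?thesis by simp
qed

lemma log_sobolev_inequality:
  assumes "\<And>x y. 0 \<le> P x y" "\<And>x. 0 \<le> \<nu> x" "(\<Sum>x\<in>UNIV. \<nu> x) = 1"
    and "0 < entropy_like \<phi> \<nu>"
  shows "log_sobolev_const P \<nu> * entropy_like \<phi> \<nu> \<le> dirichlet_form P \<nu> \<phi>"
proof -
  let ?S = "{dirichlet_form P \<nu> f / entropy_like f \<nu> | f.
      entropy_like f \<nu> \<noteq> 0 \<and> (\<exists>x y. f x \<noteq> f y)}"
  have "\<exists>x y. \<phi> x \<noteq> \<phi> y"
  proof (rule ccontr)
    assume "\<not> ?thesis"
    then have c: "\<And>x. \<phi> x = \<phi> undefined" by metis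
    have "entropy_like \<phi> \<nu> = 0"
      unfolding entropy_like_def lp_norm_2_power2[OF assms(2)]
      by (subst c, subst (2) c, simp add: sum_distrib_left[symmetric] assms(3))
    then show False using assms(4) by simp
  qed
  then have "dirichlet_form P \<nu> \<phi> / entropy_like \<phi> \<nu> \<in> ?S"
    using assms(4) by (intro CollectI exI[of _ \<phi>]) auto
  moreover have "bdd_below ?S"
    using dirichlet_form_nonneg[of P \<nu>] entropy_like_nonneg[of \<nu>] assms
    by (intro bdd_belowI[of _ 0]) auto
  ultimately have "log_sobolev_const P \<nu> \<le> dirichlet_form P \<nu> \<phi> / entropy_like \<phi> \<nu>"
    unfolding log_sobolev_const_def by (rule cInf_lower)
  then show ?thesis using assms(4) by (simp add: le_divide_eq)
qed

lemma powr_exp_entropy_le_sum_powr: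
  fixes G \<nu> :: "'v::finite \<Rightarrow> real"
  assumes "\<And>x. 0 \<le> \<nu> x" "\<And>x. 0 \<le> G x" "0 < a"
    and m: "m = (\<Sum>x\<in>UNIV. G x * \<nu> x)"
  shows "m powr a * exp ((a - 1) * (\<Sum>x\<in>UNIV. G x * ln (G x / m) * \<nu> x) / m)
      \<le> (\<Sum>x\<in>UNIV. G x powr a * \<nu> x)"
proof (cases "m = 0")
  case True then show ?thesis using assms by (auto intro: sum_nonneg)
next
  case False
  then have "0 < m" using assms by (simp add: less_le sum_nonneg)
  define w where "w x = G x * \<nu> x / m" for x
  define y where "y x = (a - 1) * ln (G x / m)" for x
  have "exp (\<Sum>x\<in>UNIV. w x * y x) \<le> (\<Sum>x\<in>UNIV. w x * exp (y x))"
    using convex_on_sum[OF _ _ exp_convex, of UNIV w y] assms \<open>0 < m\<close>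
    by (simp add: w_def m sum_divide_distrib[symmetric])
  moreover have "(\<Sum>x\<in>UNIV. w x * y x) = (a - 1) * (\<Sum>x\<in>UNIV. G x * ln (G x / m) * \<nu> x) / m"
    by (simp add: w_def y_def sum_distrib_left sum_divide_distrib mult_ac)
  moreover have "w x * exp (y x) = G x powr a * \<nu> x / m powr a" for x
  proof (cases "G x = 0")
    case True then show ?thesis by (simp add: w_def)
  next
    case False
    then have "0 < G x / m" using assms \<open>0 < m\<close> by (simp add: less_le)
    then have "w x * exp (y x) = \<nu> x * ((G x / m) powr 1 * (G x / m) powr (a - 1))"
      by (simp add: w_def y_def powr_def)
    also have "\<dots> = \<nu> x * (G x / m) powr a"
      by (simp only: powr_add[symmetric]) simp
    also have "\<dots> = G x powr a * \<nu> x / m powr a"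
      using assms \<open>0 < m\<close> by (simp add: powr_divide)
    finally show ?thesis .
  qed
  ultimately show ?thesis using \<open>0 < m\<close> by (simp add: sum_divide_distrib[symmetric] field_simps)
qed

lemma diff_le_1_if_powr_exp_le_1:
  fixes m E H a :: real
  assumes "0 \<le> m" "0 \<le> E" "0 < a" "a < 1"
    and bound: "m powr a * exp ((a - 1) * H / m) \<le> 1"
    and energy: "0 < H \<Longrightarrow> (1 / a - 1) * H \<le> E"
  shows "m - E \<le> 1"
proof (cases "m = 0")
  case True then show ?thesis using assms by simp
next
  case False
  with \<open>0 \<le> m\<close> have "0 < m" by simp
  define c where "c = 1 / a - 1"
  have "0 < c" using assms by (simp add: c_def)
  have "m * exp (- c * H / m) = (m powr a * exp ((a - 1) * H / m)) powr (1 / a)"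
  proof -
    have "(m powr a * exp ((a - 1) * H / m)) powr (1 / a) = m * exp ((a - 1) * H / m * (1 / a))"
      using \<open>0 < m\<close> \<open>0 < a\<close> by (simp add: powr_mult powr_powr exp_powr_real)
    also have "(a - 1) * H / m * (1 / a) = - c * H / m"
      using \<open>0 < a\<close> \<open>0 < m\<close> by (simp add: c_def field_simps)
    finally show ?thesis by simp
  qed
  also have "\<dots> \<le> 1"
    using bound \<open>0 < a\<close> powr_mono2[of "1 / a" _ 1] by (simp add: \<open>0 < m\<close>)
  finally have "m * exp (- c * H / m) \<le> 1" .
  moreover have "m - E \<le> m - c * H"
    using energy \<open>0 < c\<close> \<open>0 \<le> E\<close> mult_nonneg_nonpos[of c H]
    by (cases "0 < H") (auto simp: c_def)
  moreover have "m - c * H \<le> m * exp (- c * H / m)"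
  proof -
    have "m * (1 + - c * H / m) \<le> m * exp (- c * H / m)"
      using \<open>0 < m\<close> exp_ge_add_one_self[of "- c * H / m"] by (intro mult_left_mono) auto
    moreover have "m * (1 + - c * H / m) = m - c * H" using \<open>0 < m\<close> by (simp add: field_simps)
    ultimately show ?thesis by simp
  qed
  ultimately show ?thesis by linarith
qed

lemma sum_abs_kernel_apply_powr_le_1_contractive:
  assumes "markov_kernel K" "prob_measure_fin \<mu>" "1 \<le> q0" "0 \<le> q" "q \<le> q0"
    and "(\<Sum>y\<in>UNIV. \<bar>f y\<bar> powr q0 * push_measure \<mu> K y) \<le> 1"
  shows "(\<Sum>x\<in>UNIV. \<bar>kernel_apply K f x\<bar> powr q * \<mu> x) \<le> 1"
proof -
  define t where "t = q / q0"
  define h where "h y = \<bar>f y\<bar> powr q0" for y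
  have "0 \<le> t" "t \<le> 1" using assms by (auto simp: t_def)
  have "\<bar>kernel_apply K f x\<bar> powr q \<le> 1 + t * (kernel_apply K h x - 1)" for x
  proof -
    have "\<bar>kernel_apply K f x\<bar> powr q = (\<bar>kernel_apply K f x\<bar> powr q0) powr t"
      using assms by (simp add: powr_powr t_def)
    also have "\<dots> \<le> (kernel_apply K h x) powr t"
      unfolding h_def using assms \<open>0 \<le> t\<close> by (intro powr_mono2 abs_kernel_apply_powr_le) auto
    also have "\<dots> \<le> 1 + t * (kernel_apply K h x - 1)"
      using \<open>0 \<le> t\<close> \<open>t \<le> 1\<close> kernel_apply_nonneg[OF assms(1)]
      by (intro powr_le_tangent) (auto simp: h_def)
    finally show ?thesis .
  qed
  then have "(\<Sum>x\<in>UNIV. \<bar>kernel_apply K f x\<bar> powr q * \<mu> x)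
      \<le> (\<Sum>x\<in>UNIV. (1 + t * (kernel_apply K h x - 1)) * \<mu> x)"
    using assms(2) by (intro sum_mono mult_right_mono) (auto simp: prob_measure_fin_def)
  also have "\<dots> = (\<Sum>x\<in>UNIV. (1 - t) * \<mu> x + t * (\<mu> x * kernel_apply K h x))"
    by (simp add: algebra_simps)
  also have "\<dots> = (1 - t) * (\<Sum>x\<in>UNIV. \<mu> x) + t * (\<Sum>x\<in>UNIV. \<mu> x * kernel_apply K h x)"
    by (simp add: sum.distrib sum_distrib_left)
  also have "\<dots> = 1 - t + t * (\<Sum>y\<in>UNIV. \<bar>f y\<bar> powr q0 * push_measure \<mu> K y)"
    using assms(2) by (simp add: sum_mult_kernel_apply h_def prob_measure_fin_def mult_ac)
  also have "\<dots> \<le> 1" using mult_left_mono[OF assms(6) \<open>0 \<le> t\<close>] by simp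
  finally show ?thesis .
qed

lemma sum_abs_kernel_apply_powr_le_1_hypercontractive:
  assumes K: "markov_kernel K" and \<mu>: "prob_measure_fin \<mu>" and pos: "\<forall>y. push_measure \<mu> K y > 0"
    and "0 < q0" "q0 < q" "2 \<le> q"
    and q_le: "q \<le> (1 + log_sobolev_const (P_kernel K \<mu>) (push_measure \<mu> K)) * q0"
    and f: "(\<Sum>y\<in>UNIV. \<bar>f y\<bar> powr q0 * push_measure \<mu> K y) \<le> 1"
  shows "(\<Sum>x\<in>UNIV. \<bar>kernel_apply K f x\<bar> powr q * \<mu> x) \<le> 1"
proof -
  let ?\<mu>' = "push_measure \<mu> K" and ?P = "P_kernel K \<mu>"
  have \<mu>'_nonneg: "\<And>x. 0 \<le> ?\<mu>' x" using pos less_imp_le by blast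
  define \<phi> where "\<phi> y = \<bar>f y\<bar> powr (q / 2)" for y
  define a where "a = q0 / q"
  define m where "m = (\<Sum>y\<in>UNIV. \<phi> y ^ 2 * ?\<mu>' y)"
  define E where "E = dirichlet_form ?P ?\<mu>' \<phi>"
  define H where "H = entropy_like \<phi> ?\<mu>'"
  have "(\<Sum>x\<in>UNIV. \<bar>kernel_apply K f x\<bar> powr q * \<mu> x) \<le> (\<Sum>x\<in>UNIV. \<mu> x * (kernel_apply K \<phi> x)^2)"
    using \<mu> abs_kernel_apply_powr_le_power2[OF K \<open>2 \<le> q\<close>, of f] unfolding \<phi>_def
    by (intro sum_mono) (auto simp: prob_measure_fin_def mult.commute intro: mult_left_mono)
  also have "\<dots> = m - E"
    unfolding E_def m_def dirichlet_form_P_kernel[OF K pos] by (simp add: mult.commute)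
  also have "m - E \<le> 1"
  proof (rule diff_le_1_if_powr_exp_le_1)
    show "0 \<le> m" "0 \<le> E" "0 < a" "a < 1"
      using assms \<mu>'_nonneg P_kernel_nonneg[OF K \<mu> pos]
      by (auto simp: m_def E_def a_def intro: sum_nonneg dirichlet_form_nonneg)
    have "(\<phi> y ^ 2) powr a = \<bar>f y\<bar> powr q0" for y
    proof -
      have "\<phi> y ^ 2 = \<bar>f y\<bar> powr q"
        by (cases "f y = 0") (simp_all add: \<phi>_def powr_power)
      then show ?thesis using assms by (simp add: powr_powr a_def)
    qed
    then have "m powr a * exp ((a - 1) * H / m) \<le> (\<Sum>y\<in>UNIV. \<bar>f y\<bar> powr q0 * ?\<mu>' y)"
      using powr_exp_entropy_le_sum_powr[of ?\<mu>' "\<lambda>y. \<phi> y ^ 2" a m] \<mu>'_nonneg \<open>0 < a\<close>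
      unfolding H_def entropy_like_def lp_norm_2_power2[OF \<mu>'_nonneg] m_def
      by (simp add: mult_ac)
    with f show "m powr a * exp ((a - 1) * H / m) \<le> 1" by simp
    assume "0 < H"
    have "1 / a - 1 \<le> log_sobolev_const ?P ?\<mu>'"
      using q_le assms by (simp add: a_def field_simps)
    then have "(1 / a - 1) * H \<le> log_sobolev_const ?P ?\<mu>' * H"
      using \<open>0 < H\<close> by (simp add: mult_right_mono)
    also have "\<dots> \<le> E"
      unfolding H_def E_def using \<open>0 < H\<close> \<mu>'_nonneg P_kernel_nonneg[OF K \<mu> pos]
      by (intro log_sobolev_inequality sum_push_measure[OF K \<mu>]) (auto simp: H_def)
    finally show "(1 / a - 1) * H \<le> E" .
  qed
  finally show ?thesis .
qed

lemma lp_norm_le_1_iff: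
  assumes "0 < p" "\<And>x. 0 \<le> \<nu> x"
  shows "lp_norm p \<nu> f \<le> 1 \<longleftrightarrow> (\<Sum>x\<in>UNIV. \<bar>f x\<bar> powr p * \<nu> x) \<le> 1"
proof -
  have "0 \<le> (\<Sum>x\<in>UNIV. \<bar>f x\<bar> powr p * \<nu> x)" using assms by (auto intro: sum_nonneg)
  then show ?thesis
    unfolding lp_norm_def using assms(1) powr_less_mono2[of "1 / p" 1] powr_le1[of "1 / p"]
    by (smt (verit) divide_pos_pos powr_one_eq_one)
qed

theorem proposition4p1:
  fixes K :: "'v::finite \<Rightarrow> 'v \<Rightarrow> real" and \<mu> :: "'v \<Rightarrow> real" and q0 q :: real
  assumes "markov_kernel K"
    and "prob_measure_fin \<mu>"
    and "\<forall>y. push_measure \<mu> K y > 0"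
    and "q0 \<ge> 2"
    and "0 < q"
    and "q \<le> (1 + log_sobolev_const (P_kernel K \<mu>) (push_measure \<mu> K)) * q0"
  shows "op_norm K q0 (push_measure \<mu> K) q \<mu> \<le> 1"
  unfolding op_norm_def
proof (rule cSup_least)
  show "{lp_norm q \<mu> (kernel_apply K f) | f. lp_norm q0 (push_measure \<mu> K) f \<le> 1} \<noteq> {}"
    using assms(4) by (auto intro!: exI[of _ "\<lambda>_. 0"] simp: lp_norm_def)
next
  have \<mu>'_nonneg: "\<And>x. 0 \<le> push_measure \<mu> K x" using assms(3) less_imp_le by blast
  have \<mu>_nonneg: "\<And>x. 0 \<le> \<mu> x" using assms(2) by (simp add: prob_measure_fin_def)
  fix z assume "z \<in> {lp_norm q \<mu> (kernel_apply K f) | f. lp_norm q0 (push_measure \<mu> K) f \<le> 1}"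
  then obtain f where z: "z = lp_norm q \<mu> (kernel_apply K f)"
    and f: "(\<Sum>y\<in>UNIV. \<bar>f y\<bar> powr q0 * push_measure \<mu> K y) \<le> 1"
    using lp_norm_le_1_iff[of q0 "push_measure \<mu> K"] \<mu>'_nonneg assms(4) by auto
  have "(\<Sum>x\<in>UNIV. \<bar>kernel_apply K f x\<bar> powr q * \<mu> x) \<le> 1"
  proof (cases "q \<le> q0")
    case True
    with f assms(4,5) show ?thesis
      by (intro sum_abs_kernel_apply_powr_le_1_contractive[OF assms(1,2)]) auto
  next
    case False
    with f assms(4,6) show ?thesis
      by (intro sum_abs_kernel_apply_powr_le_1_hypercontractive[OF assms(1-3)]) auto
  qed
  then show "z \<le> 1" unfolding z using lp_norm_le_1_iff[of q \<mu>] \<mu>_nonneg assms(5) by blast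
qed

end
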